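(* Let $D$ be a Gauss diagram of an oriented virtual knot, and let $T$ be a triple of chords of $D$. Then $T$ is 3-movable if and only if $T$ is matched and all three chords of $T$ have the same 3-sign.
   Context: Gauss diagram: given an oriented virtual knot diagram, traverse the knot and record the classical crossings in order (each crossing is met twice). Place these points counterclockwise around a circle, and for each classical crossing draw a directed chord (arrow) from the point corresponding to passing over the crossing to the point corresponding to passing under it; each chord is labeled with the sign ($\pm1$) of the crossing. Virtual crossings do not appear. Triples and arcs: a triple of chords $T$ under consideration has its six endpoints lying on three arcs of the circle, each arc containing exactly two endpoints of chords of $T$ and no other chord endpoints of $D$; the three arcs are met in a cyclic (counterclockwise) order around the circle. 3-movable: $T$ is 3-movable if its three chords (equivalently, the corresponding three classical crossings of a virtual knot diagram with Gauss diagram $D$) can be repositioned by a classical Reidemeister III move, i.e. they are the three crossings of a Reidemeister III configuration: three strands in a disk pairwise crossing once, one strand passing over both others and one strand passing under both others, with the three arcs of the Gauss diagram corresponding to the three strands. Matched: $T$ is matched if one of its three arcs contains the two arrowheads of two chords of $T$, another arc contains the two arrowtails of two chords of $T$, and the third arc contains one head and one tail belonging to two distinct chords of $T$. 3-sign: for each chord $c$ of a matched triple define three numbers: its sign ($\pm1$, the sign of the crossing); its parity, $+1$ if $c$ intersects an even number of the other chords of $T$ and $-1$ if an odd number; its direction, $+1$ if $c$ points counterclockwise around the three arcs (from an arc to the next arc in the counterclockwise cyclic order of the three arcs) and $-1$ if it points clockwise. The 3-sign of $c$ is the product of its sign, parity and direction. *)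

theory Defs
  imports Complex_Main
begin

text \<open>The circle of a Gauss diagram with N chord endpoints is modelled by the positions
  0, 1, ..., N-1, placed counterclockwise in this order (position N-1 is followed by 0);
  traversing the knot corresponds to going counterclockwise.
  A chord (arrow) is a triple (tail, head, sign): tail = point where the knot passes over
  the crossing, head = point where it passes under, sign = sign of the crossing.\<close>

type_synonym chord = "nat \<times> nat \<times> int"

definition ctail :: "chord \<Rightarrow> nat" where "ctail c = fst c"
definition chead :: "chord \<Rightarrow> nat" where "chead c = fst (snd c)"
definition csign :: "chord \<Rightarrow> int" where "csign c = snd (snd c)"

definition ends :: "chord \<Rightarrow> nat set" where "ends c = {ctail c, chead c}"

definition gauss_diagram :: "nat \<Rightarrow> chord set \<Rightarrow> bool" where
  "gauss_diagram N D \<longleftrightarrow> finite D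
     \<and> (\<forall>c\<in>D. ctail c < N \<and> chead c < N \<and> ctail c \<noteq> chead c \<and> (csign c = 1 \<or> csign c = -1))
     \<and> (\<forall>c\<in>D. \<forall>d\<in>D. c \<noteq> d \<longrightarrow> ends c \<inter> ends d = {})
     \<and> (\<Union>c\<in>D. ends c) = {0..<N}"

definition arc :: "nat \<Rightarrow> nat \<Rightarrow> nat set" where
  "arc N a = {a, Suc a mod N}"

text \<open>T is a triple of chords of D under consideration, with its three arcs given by their
  starting points A: the six endpoints of T lie on three arcs, each containing exactly two
  endpoints of T and no other endpoint of D.\<close>
definition triple_with_arcs :: "nat \<Rightarrow> chord set \<Rightarrow> chord set \<Rightarrow> nat set \<Rightarrow> bool" where
  "triple_with_arcs N D T A \<longleftrightarrow> T \<subseteq> D \<and> card T = 3 \<and> A \<subseteq> {0..<N} \<and> card A = 3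
     \<and> (\<forall>a\<in>A. \<forall>b\<in>A. a \<noteq> b \<longrightarrow> arc N a \<inter> arc N b = {})
     \<and> (\<Union>a\<in>A. arc N a) = (\<Union>c\<in>T. ends c)"

definition arc_of :: "nat \<Rightarrow> nat set \<Rightarrow> nat \<Rightarrow> nat" where
  "arc_of N A p = (THE a. a \<in> A \<and> p \<in> arc N a)"

definition chord_at :: "chord set \<Rightarrow> nat \<Rightarrow> chord" where
  "chord_at T p = (THE c. c \<in> T \<and> p \<in> ends c)"

definition next_arc :: "nat set \<Rightarrow> nat \<Rightarrow> nat" where
  "next_arc A a = (if \<exists>b\<in>A. a < b then Min {b\<in>A. a < b} else Min A)"

definition matched :: "nat \<Rightarrow> chord set \<Rightarrow> nat set \<Rightarrow> bool" where
  "matched N T A \<longleftrightarrow> (\<exists>ah\<in>A. \<exists>atl\<in>A. \<exists>am\<in>A. ah \<noteq> atl \<and> ah \<noteq> am \<and> atl \<noteq> am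
     \<and> arc N ah \<subseteq> chead ` T \<and> arc N atl \<subseteq> ctail ` T
     \<and> (\<exists>c\<in>T. \<exists>d\<in>T. c \<noteq> d \<and> chead c \<in> arc N am \<and> ctail d \<in> arc N am))"

definition cyc_between :: "nat \<Rightarrow> nat \<Rightarrow> nat \<Rightarrow> bool" where
  "cyc_between x y z \<longleftrightarrow> (x < y \<and> y < z) \<or> (y < z \<and> z < x) \<or> (z < x \<and> x < y)"

definition crosses :: "chord \<Rightarrow> chord \<Rightarrow> bool" where
  "crosses c d \<longleftrightarrow> cyc_between (ctail c) (ctail d) (chead c) \<noteq> cyc_between (ctail c) (chead d) (chead c)"

definition parity :: "chord set \<Rightarrow> chord \<Rightarrow> int" where
  "parity T c = (if even (card {d\<in>T. d \<noteq> c \<and> crosses c d}) then 1 else -1)"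

definition direction :: "nat \<Rightarrow> nat set \<Rightarrow> chord \<Rightarrow> int" where
  "direction N A c = (if arc_of N A (chead c) = next_arc A (arc_of N A (ctail c)) then 1 else -1)"

definition three_sign :: "nat \<Rightarrow> chord set \<Rightarrow> nat set \<Rightarrow> chord \<Rightarrow> int" where
  "three_sign N T A c = csign c * parity T c * direction N A c"

definition cross2 :: "real \<times> real \<Rightarrow> real \<times> real \<Rightarrow> real" where
  "cross2 u v = fst u * snd v - snd u * fst v"

definition dot2 :: "real \<times> real \<Rightarrow> real \<times> real \<Rightarrow> real" where
  "dot2 u v = fst u * fst v + snd u * snd v"

definition on_line :: "real \<times> real \<Rightarrow> real \<times> real \<Rightarrow> real \<times> real \<Rightarrow> bool" where
  "on_line P V x \<longleftrightarrow> (\<exists>t. x = (fst P + t * fst V, snd P + t * snd V))"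

text \<open>A Reidemeister III configuration, realised by three oriented straight strands in the
  plane (line through P a with direction V a for the strand of arc a), pairwise crossing
  once at three distinct points X c, with heights h (distinct heights: one strand over both
  others, one under both others).  Each chord c of T is the crossing of the strands of the
  arcs containing its endpoints; its tail is on the over strand, its head on the under
  strand; its sign is the crossing sign (positive iff the pair (over direction, under
  direction) is positively oriented); along each strand the two crossings are met in the
  order in which the arc meets the corresponding endpoints (counterclockwise).\<close>
definition three_movable :: "nat \<Rightarrow> chord set \<Rightarrow> nat set \<Rightarrow> bool" where
  "three_movable N T A \<longleftrightarrow>
    (\<exists>(P :: nat \<Rightarrow> real \<times> real) (V :: nat \<Rightarrow> real \<times> real) (h :: nat \<Rightarrow> real)
        (X :: chord \<Rightarrow> real \<times> real).
       (\<forall>a\<in>A. \<forall>b\<in>A. a \<noteq> b \<longrightarrow> cross2 (V a) (V b) \<noteq> 0)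
     \<and> inj_on h A \<and> inj_on X T
     \<and> (\<forall>c\<in>T. arc_of N A (ctail c) \<noteq> arc_of N A (chead c)
          \<and> on_line (P (arc_of N A (ctail c))) (V (arc_of N A (ctail c))) (X c)
          \<and> on_line (P (arc_of N A (chead c))) (V (arc_of N A (chead c))) (X c)
          \<and> h (arc_of N A (ctail c)) > h (arc_of N A (chead c))
          \<and> real_of_int (csign c) = sgn (cross2 (V (arc_of N A (ctail c))) (V (arc_of N A (chead c)))))
     \<and> (\<forall>a\<in>A. dot2 (fst (X (chord_at T (Suc a mod N))) - fst (X (chord_at T a)),
                     snd (X (chord_at T (Suc a mod N))) - snd (X (chord_at T a))) (V a) > 0))"

end

theory Submission
  imports Defs
begin

text \<open>Label the arcs 1, 2, 3 counterclockwise. A chord with both ends on one arc makes T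
  neither matched nor 3-movable; otherwise the chords are k12, k13, k23, with k_ij joining arcs
  i and j. Let t_i = +1 or -1 record which of the two chords at arc i is met first, and let s_ij
  be the sign of k_ij, negated when the strand of arc i passes under at k_ij. Parities and
  directions work out so that the 3-sign of k_ij is -t_i t_j s_ij; hence the 3-signs agree iff
  the three products t_i t_j s_ij agree.

  In a Reidemeister III picture by straight strands with directions V_i meeting at X_ij, the
  conditions of 3-movability say that s_ij is the sign of V_i x V_j and t_i is the direction of
  travel along strand i from one of its crossings to the other. Writing X13 - X12 = a V1,
  X23 - X12 = b V2, X23 - X13 = c V3 and crossing a V1 + c V3 = b V2 with V2 and with V1 forces
  the products t_i t_j s_ij to agree; conversely, explicit lines realise all such signs. The
  heights of the strands are independent of the picture, and they exist iff the over-relation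
  among the three strands is acyclic, which is exactly the condition of being matched.\<close>

definition sign_of :: "bool \<Rightarrow> int" where
  "sign_of b = (if b then 1 else -1)"

subsection \<open>Three lines in the plane\<close>

abbreviation vector_from :: "real \<times> real \<Rightarrow> real \<times> real \<Rightarrow> real \<times> real" where
  "vector_from x y \<equiv> (fst y - fst x, snd y - snd x)"

lemma on_lineI:
  assumes "fst x = fst P + t * fst V" "snd x = snd P + t * snd V"
  shows "on_line P V x"
  unfolding on_line_def using assms by (intro exI[of _ t]) (simp add: prod_eq_iff)

lemma on_line_vector_from:
  assumes "on_line P V x" "on_line P V y"
  obtains t where "vector_from x y = (t * fst V, t * snd V)"
proof -
  from assms obtain r s where "x = (fst P + r * fst V, snd P + r * snd V)"
    and "y = (fst P + s * fst V, snd P + s * snd V)"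
    unfolding on_line_def by blast
  then have "vector_from x y = ((s - r) * fst V, (s - r) * snd V)"
    by (simp add: algebra_simps)
  then show thesis by (rule that)
qed

lemma cross2_antisym: "cross2 u v = - cross2 v u"
  by (simp add: cross2_def)

lemma dot2_vector_from_swap: "dot2 (vector_from y x) v = - dot2 (vector_from x y) v"
  by (simp add: dot2_def algebra_simps)

lemma sgn_dot2_multiple:
  assumes "V \<noteq> (0, 0)"
  shows "sgn (dot2 (t * fst V, t * snd V) V) = sgn t"
proof -
  have "fst V * fst V + snd V * snd V > 0"
    using assms by (cases V) (simp add: sum_squares_gt_zero_iff)
  then show ?thesis
    by (simp add: dot2_def sgn_mult algebra_simps flip: distrib_left)
qed

lemma distinct_if_dot2_nonzero: "sgn (dot2 (vector_from x y) v) \<noteq> 0 \<Longrightarrow> x \<noteq> y"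
  by (auto simp: dot2_def)

lemma crossing_order_sign_relations:
  assumes X12: "on_line P1 V1 X12" "on_line P2 V2 X12"
    and X13: "on_line P1 V1 X13" "on_line P3 V3 X13"
    and X23: "on_line P2 V2 X23" "on_line P3 V3 X23"
    and nonparallel: "cross2 V1 V2 \<noteq> 0" "cross2 V1 V3 \<noteq> 0" "cross2 V2 V3 \<noteq> 0"
  defines "t1 \<equiv> sgn (dot2 (vector_from X12 X13) V1)"
    and "t2 \<equiv> sgn (dot2 (vector_from X12 X23) V2)"
    and "t3 \<equiv> sgn (dot2 (vector_from X13 X23) V3)"
  shows "t1 * t2 * sgn (cross2 V1 V2) = t1 * t3 * sgn (cross2 V1 V3)"
    and "t1 * t3 * sgn (cross2 V1 V3) = t2 * t3 * sgn (cross2 V2 V3)"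
proof -
  obtain a where a: "vector_from X12 X13 = (a * fst V1, a * snd V1)"
    using X12(1) X13(1) by (rule on_line_vector_from)
  obtain b where b: "vector_from X12 X23 = (b * fst V2, b * snd V2)"
    using X12(2) X23(1) by (rule on_line_vector_from)
  obtain c where c: "vector_from X13 X23 = (c * fst V3, c * snd V3)"
    using X13(2) X23(2) by (rule on_line_vector_from)
  have nonzero: "V1 \<noteq> (0, 0)" "V2 \<noteq> (0, 0)" "V3 \<noteq> (0, 0)"
    using nonparallel by (auto simp: cross2_def)
  have t: "t1 = sgn a" "t2 = sgn b" "t3 = sgn c"
    unfolding t1_def t2_def t3_def a b c by (simp_all add: sgn_dot2_multiple nonzero)
  have sum: "a * fst V1 + c * fst V3 = b * fst V2" "a * snd V1 + c * snd V3 = b * snd V2"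
    using a b c by (auto simp: prod_eq_iff algebra_simps)
  have ac: "a * cross2 V1 V2 = c * cross2 V2 V3"
  proof -
    have "(a * fst V1 + c * fst V3) * snd V2 - (a * snd V1 + c * snd V3) * fst V2 = 0"
      unfolding sum by simp
    then show ?thesis by (simp add: cross2_def algebra_simps)
  qed
  have bc: "b * cross2 V1 V2 = c * cross2 V1 V3"
  proof -
    have "fst V1 * (a * snd V1 + c * snd V3) - snd V1 * (a * fst V1 + c * fst V3)
        = fst V1 * (b * snd V2) - snd V1 * (b * fst V2)"
      unfolding sum by simp
    then show ?thesis by (simp add: cross2_def algebra_simps)
  qed
  have "a * b * cross2 V1 V2 = a * c * cross2 V1 V3"
    using arg_cong[OF bc, of "(*) a"] by (simp add: algebra_simps)
  moreover have "a * c * cross2 V1 V3 = b * c * cross2 V2 V3"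
    using arg_cong[OF ac, of "(*) b"] arg_cong[OF bc, of "(*) a"] by (simp add: algebra_simps)
  ultimately show "t1 * t2 * sgn (cross2 V1 V2) = t1 * t3 * sgn (cross2 V1 V3)"
    and "t1 * t3 * sgn (cross2 V1 V3) = t2 * t3 * sgn (cross2 V2 V3)"
    unfolding t by (metis sgn_mult)+
qed

lemma sign_cancel: "(s :: real) * s = 1 \<Longrightarrow> x * s = y \<Longrightarrow> x = y * s"
  by (metis mult.assoc mult_1_right)

text \<open>The witnesses: the lines through the origin with directions (1, 0) and (0, s12), and the
  line through (t1, 0) with direction (-s12 s23, s13).\<close>
lemma three_lines_realisable:
  fixes s12 s13 s23 t1 t2 t3 :: real
  assumes signs: "s12 \<in> {1, -1}" "s13 \<in> {1, -1}" "s23 \<in> {1, -1}"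
      "t1 \<in> {1, -1}" "t2 \<in> {1, -1}" "t3 \<in> {1, -1}"
    and relations: "t1 * t2 * s12 = t1 * t3 * s13" "t1 * t3 * s13 = t2 * t3 * s23"
  obtains P1 V1 X12 P2 V2 X13 P3 V3 X23 where
    "on_line P1 V1 X12" "on_line P2 V2 X12" "on_line P1 V1 X13" "on_line P3 V3 X13"
    "on_line P2 V2 X23" "on_line P3 V3 X23"
    "sgn (cross2 V1 V2) = s12" "sgn (cross2 V1 V3) = s13" "sgn (cross2 V2 V3) = s23"
    "sgn (dot2 (vector_from X12 X13) V1) = t1" "sgn (dot2 (vector_from X12 X23) V2) = t2"
    "sgn (dot2 (vector_from X13 X23) V3) = t3"
proof -
  have squares: "s12 * s12 = 1" "s13 * s13 = 1" "s23 * s23 = 1" "t1 * t1 = 1"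
    using signs by auto
  have "t1 * t2 * s12 = t2 * t3 * s23" using relations by simp
  then have t1_s12: "t1 * s12 = t3 * s23" using signs(5) by (auto simp: algebra_simps)
  have t2_s12: "t2 * s12 = t3 * s13" using relations(1) signs(4) by (auto simp: algebra_simps)
  have t3: "t3 = t1 * s12 * s23" using sign_cancel[OF squares(3) t1_s12[symmetric]] .
  have t2: "t2 = t3 * s13 * s12" using sign_cancel[OF squares(1) t2_s12] .
  define V3 :: "real \<times> real" where "V3 = (- (s12 * s23), s13)"
  define X23 :: "real \<times> real" where "X23 = (0, t1 * s12 * s13 * s23)"
  show thesis
  proof (rule that[of "(0, 0)" "(1, 0)" "(0, 0)" "(0, 0)" "(0, s12)" "(t1, 0)" "(t1, 0)" V3 X23])
    show "on_line (0, 0) (1, 0) (0, 0)" "on_line (0, 0) (0, s12) (0, 0)"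
      "on_line (0, 0) (1, 0) (t1, 0)" "on_line (t1, 0) V3 (t1, 0)"
      by (auto intro: on_lineI[where t = 0] on_lineI[where t = t1])
    show "on_line (0, 0) (0, s12) X23"
      using squares by (auto simp: X23_def intro!: on_lineI[where t = "t1 * s13 * s23"])
    show "on_line (t1, 0) V3 X23"
      using squares
      by (auto simp: X23_def V3_def algebra_simps intro!: on_lineI[where t = "t1 * s12 * s23"])
    show "sgn (cross2 (1, 0) (0, s12)) = s12" "sgn (cross2 (1, 0) V3) = s13"
      "sgn (cross2 (0, s12) V3) = s23"
      using signs squares by (auto simp: cross2_def V3_def algebra_simps)
    show "sgn (dot2 (vector_from (0, 0) (t1, 0)) (1, 0)) = t1"
      using signs by (auto simp: dot2_def)
    show "sgn (dot2 (vector_from (0, 0) X23) (0, s12)) = t2"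
      using signs(1-4) by (auto simp: dot2_def X23_def t2 t3)
    show "sgn (dot2 (vector_from (t1, 0) X23) V3) = t3"
      using signs(1-4) by (auto simp: dot2_def X23_def V3_def t3)
  qed
qed

subsection \<open>Heights and planar pictures of three strands\<close>

text \<open>The witness height of a strand is the number of strands it passes over.\<close>
lemma exists_heights_iff_acyclic:
  fixes x y z :: 'a
  assumes "distinct [x, y, z]"
  shows "(\<exists>h :: 'a \<Rightarrow> real. inj_on h {x, y, z}
            \<and> (if p then h y < h x else h x < h y)
            \<and> (if q then h z < h x else h x < h z)
            \<and> (if r then h z < h y else h y < h z))
         \<longleftrightarrow> \<not> (p \<and> \<not> q \<and> r \<or> \<not> p \<and> q \<and> \<not> r)"
    (is "(\<exists>h. ?heights h) \<longleftrightarrow> _")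
proof
  assume "\<exists>h. ?heights h"
  then show "\<not> (p \<and> \<not> q \<and> r \<or> \<not> p \<and> q \<and> \<not> r)"
    by (cases p; cases q; cases r) auto
next
  assume "\<not> (p \<and> \<not> q \<and> r \<or> \<not> p \<and> q \<and> \<not> r)"
  then have "?heights (\<lambda>v. if v = x then of_bool p + of_bool q
      else if v = y then of_bool (\<not> p) + of_bool r else of_bool (\<not> q) + of_bool (\<not> r))"
    using assms by (cases p; cases q; cases r) auto
  then show "\<exists>h. ?heights h" by blast
qed

lemma height_of_oriented_pair:
  "ov = x \<and> un = y \<or> ov = y \<and> un = x \<Longrightarrow> x \<noteq> y \<Longrightarrow>
    h un < h ov \<longleftrightarrow> (if ov = x then h y < h x else h x < h y)"
  by auto

lemma on_lines_of_oriented_pair: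
  "ov = x \<and> un = y \<or> ov = y \<and> un = x \<Longrightarrow>
    on_line (P ov) (V ov) z \<and> on_line (P un) (V un) z \<longleftrightarrow> on_line (P x) (V x) z \<and> on_line (P y) (V y) z"
  by auto

lemma crossing_sign_of_oriented_pair:
  assumes "ov = x \<and> un = y \<or> ov = y \<and> un = x" "x \<noteq> y"
  shows "real_of_int s = sgn (cross2 (V ov) (V un))
    \<longleftrightarrow> sgn (cross2 (V x) (V y)) = of_int (s * sign_of (ov = x))"
  using assms by (auto simp: sign_of_def cross2_antisym[of "V y"] sgn_minus)

lemma order_sign_of_choice:
  "dot2 (vector_from (X (if b then p else q)) (X (if b then q else p))) v > 0
    \<longleftrightarrow> sgn (dot2 (vector_from (X p) (X q)) v) = of_int (sign_of b)"
  by (cases b) (auto simp: sign_of_def dot2_vector_from_swap[of "X p"] sgn_if)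

definition strand_heights :: "nat \<Rightarrow> chord set \<Rightarrow> nat set \<Rightarrow> (nat \<Rightarrow> real) \<Rightarrow> bool" where
  "strand_heights N T A h \<longleftrightarrow> inj_on h A
     \<and> (\<forall>c\<in>T. h (arc_of N A (chead c)) < h (arc_of N A (ctail c)))"

definition planar_strands :: "nat \<Rightarrow> chord set \<Rightarrow> nat set \<Rightarrow> (nat \<Rightarrow> real \<times> real)
    \<Rightarrow> (nat \<Rightarrow> real \<times> real) \<Rightarrow> (chord \<Rightarrow> real \<times> real) \<Rightarrow> bool" where
  "planar_strands N T A P V X \<longleftrightarrow>
     (\<forall>a\<in>A. \<forall>b\<in>A. a \<noteq> b \<longrightarrow> cross2 (V a) (V b) \<noteq> 0) \<and> inj_on X T
     \<and> (\<forall>c\<in>T. on_line (P (arc_of N A (ctail c))) (V (arc_of N A (ctail c))) (X c)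
          \<and> on_line (P (arc_of N A (chead c))) (V (arc_of N A (chead c))) (X c)
          \<and> real_of_int (csign c) = sgn (cross2 (V (arc_of N A (ctail c))) (V (arc_of N A (chead c)))))
     \<and> (\<forall>a\<in>A. dot2 (vector_from (X (chord_at T a)) (X (chord_at T (Suc a mod N)))) (V a) > 0)"

lemma three_movable_iff_heights_and_strands:
  assumes "\<forall>c\<in>T. arc_of N A (ctail c) \<noteq> arc_of N A (chead c)"
  shows "three_movable N T A \<longleftrightarrow>
    (\<exists>h. strand_heights N T A h) \<and> (\<exists>P V X. planar_strands N T A P V X)"
  using assms unfolding three_movable_def strand_heights_def planar_strands_def by blast

lemma three_movable_no_chord_within_arc:
  "three_movable N T A \<Longrightarrow> c \<in> T \<Longrightarrow> arc_of N A (ctail c) \<noteq> arc_of N A (chead c)"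
  unfolding three_movable_def by blast

lemma arc_of_eqI:
  assumes "a \<in> A" "x \<in> arc N a" "\<forall>a\<in>A. \<forall>b\<in>A. a \<noteq> b \<longrightarrow> arc N a \<inter> arc N b = {}"
  shows "arc_of N A x = a"
  unfolding arc_of_def using assms by blast

lemma chord_at_eqI:
  assumes "c \<in> T" "x \<in> ends c" "\<forall>c\<in>T. \<forall>d\<in>T. c \<noteq> d \<longrightarrow> ends c \<inter> ends d = {}"
  shows "chord_at T x = c"
  unfolding chord_at_def using assms by blast

lemma ends_doubleton_cases:
  assumes "ends c = {p, q}" "p \<noteq> q"
  shows "ctail c = p \<and> chead c = q \<or> ctail c = q \<and> chead c = p"
  using assms by (auto simp: ends_def doubleton_eq_iff)

lemma ends_eq_insert:
  assumes "x \<in> ends c" "ctail c \<noteq> chead c"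
  obtains p where "ends c = {x, p}" "p \<noteq> x"
proof (cases "x = ctail c")
  case True
  then show thesis using that[of "chead c"] assms(2) by (simp add: ends_def)
next
  case False
  then show thesis using that[of "ctail c"] assms by (auto simp: ends_def)
qed

lemma head_ne_tail:
  assumes "\<forall>c\<in>T. \<forall>d\<in>T. c \<noteq> d \<longrightarrow> ends c \<inter> ends d = {}" "\<forall>c\<in>T. ctail c \<noteq> chead c"
    and "c \<in> T" "d \<in> T"
  shows "chead c \<noteq> ctail d"
proof
  assume "chead c = ctail d"
  then have "chead c \<in> ends c \<inter> ends d" by (simp add: ends_def)
  then have "d = c" using assms by blast
  then show False using \<open>chead c = ctail d\<close> bspec[OF assms(2) assms(3)] by simp
qed

lemma cyc_between_rotate_rev:
  "x \<noteq> y \<Longrightarrow> y \<noteq> z \<Longrightarrow> x \<noteq> z \<Longrightarrow> cyc_between z y x \<longleftrightarrow> \<not> cyc_between x y z"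
  unfolding cyc_between_def by auto

lemma crosses_by_ends:
  assumes "ends c = {p, q}" "ends d = {r, s}" "distinct [p, q, r, s]"
  shows "crosses c d \<longleftrightarrow> cyc_between p r q \<noteq> cyc_between p s q"
proof -
  have "ctail c = p \<and> chead c = q \<or> ctail c = q \<and> chead c = p"
    using assms(1,3) by (intro ends_doubleton_cases) auto
  moreover have "ctail d = r \<and> chead d = s \<or> ctail d = s \<and> chead d = r"
    using assms(2,3) by (intro ends_doubleton_cases) auto
  ultimately show ?thesis
    using assms(3) cyc_between_rotate_rev[of p r q] cyc_between_rotate_rev[of p s q]
    unfolding crosses_def by auto
qed

lemma parity_in_triple:
  assumes "T = {c, d, e}" "c \<noteq> d" "c \<noteq> e" "d \<noteq> e"
  shows "parity T c = (if crosses c d then -1 else 1) * (if crosses c e then -1 else 1)"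
proof -
  have "{x\<in>T. x \<noteq> c \<and> crosses c x}
      = (if crosses c d then {d} else {}) \<union> (if crosses c e then {e} else {})"
    using assms by auto
  then show ?thesis using assms(4) unfolding parity_def by auto
qed

lemma next_arc_of_three:
  assumes "a1 < a2" "a2 < a3"
  shows "next_arc {a1, a2, a3} a1 = a2" "next_arc {a1, a2, a3} a2 = a3"
    "next_arc {a1, a2, a3} a3 = a1"
proof -
  have "{b \<in> {a1, a2, a3}. a1 < b} = {a2, a3}" "{b \<in> {a1, a2, a3}. a2 < b} = {a3}"
    using assms by auto
  then show "next_arc {a1, a2, a3} a1 = a2" "next_arc {a1, a2, a3} a2 = a3"
    using assms unfolding next_arc_def by auto
  show "next_arc {a1, a2, a3} a3 = a1"
    using assms unfolding next_arc_def by (auto simp: min_def)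
qed

lemma constant_on_triple_iff:
  "S = {a, b, c} \<Longrightarrow> (\<forall>x\<in>S. \<forall>y\<in>S. f x = f y) \<longleftrightarrow> f a = f b \<and> f b = f c"
  by auto

subsection \<open>Triples of chords between three arcs\<close>

text \<open>The arcs of T are {a_i, y_i}, met counterclockwise in the order a1 y1 a2 y2 a3 y3, and k_ij
  is the chord joining arcs i and j. The flag b_i says that a_i, the first point of arc i, is
  an end of the chord to the lower-numbered of the two other arcs.\<close>
locale arc_triple =
  fixes N :: nat and T :: "chord set" and A :: "nat set"
    and a1 a2 a3 y1 y2 y3 :: nat and k12 k13 k23 :: chord and b1 b2 b3 :: bool
  assumes A_eq: "A = {a1, a2, a3}"
    and second_points: "y1 = Suc a1 mod N" "y2 = Suc a2 mod N" "y3 = Suc a3 mod N"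
    and counterclockwise: "a1 < y1" "y1 < a2" "a2 < y2" "y2 < a3" "a3 < y3 \<or> y3 < a1"
    and T_eq: "T = {k12, k13, k23}"
    and ends_k12: "ends k12 = {if b1 then a1 else y1, if b2 then a2 else y2}"
    and ends_k13: "ends k13 = {if b1 then y1 else a1, if b3 then a3 else y3}"
    and ends_k23: "ends k23 = {if b2 then y2 else a2, if b3 then y3 else a3}"
    and csign_cases: "\<And>c. c \<in> T \<Longrightarrow> csign c = 1 \<or> csign c = -1"
begin

abbreviation over :: "chord \<Rightarrow> nat" where "over c \<equiv> arc_of N A (ctail c)"
abbreviation under :: "chord \<Rightarrow> nat" where "under c \<equiv> arc_of N A (chead c)"

abbreviation overpasses_cyclic :: bool where
  "overpasses_cyclic \<equiv> over k12 = a1 \<and> over k13 \<noteq> a1 \<and> over k23 = a2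
     \<or> over k12 \<noteq> a1 \<and> over k13 = a1 \<and> over k23 \<noteq> a2"

text \<open>The sign of c read with the strand of arc a first: the sign that the cross product of
  the direction of that strand with the direction of the other strand must have.\<close>
abbreviation crossing_sign :: "chord \<Rightarrow> nat \<Rightarrow> int" where
  "crossing_sign c a \<equiv> csign c * sign_of (over c = a)"

abbreviation sign_products_agree :: bool where
  "sign_products_agree \<equiv>
     sign_of b1 * sign_of b2 * crossing_sign k12 a1 = sign_of b1 * sign_of b3 * crossing_sign k13 a1
     \<and> sign_of b1 * sign_of b3 * crossing_sign k13 a1 = sign_of b2 * sign_of b3 * crossing_sign k23 a2"

lemma distinct_points: "distinct [a1, y1, a2, y2, a3, y3]"
  using counterclockwise by auto

lemma points_ne:
  "a1 \<noteq> y1" "a1 \<noteq> a2" "a1 \<noteq> y2" "a1 \<noteq> a3" "a1 \<noteq> y3" "y1 \<noteq> a2" "y1 \<noteq> y2" "y1 \<noteq> a3"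
  "y1 \<noteq> y3" "a2 \<noteq> y2" "a2 \<noteq> a3" "a2 \<noteq> y3" "y2 \<noteq> a3" "y2 \<noteq> y3" "a3 \<noteq> y3"
  using distinct_points by auto

lemma arcs: "arc N a1 = {a1, y1}" "arc N a2 = {a2, y2}" "arc N a3 = {a3, y3}"
  by (simp_all add: arc_def second_points)

lemma arcs_disjoint: "\<forall>a\<in>A. \<forall>b\<in>A. a \<noteq> b \<longrightarrow> arc N a \<inter> arc N b = {}"
  using distinct_points by (auto simp: A_eq arcs)

lemma arc_of_points:
  "arc_of N A a1 = a1" "arc_of N A y1 = a1" "arc_of N A a2 = a2" "arc_of N A y2 = a2"
  "arc_of N A a3 = a3" "arc_of N A y3 = a3"
  by (rule arc_of_eqI[OF _ _ arcs_disjoint]; simp add: A_eq arcs)+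

lemma chords_distinct: "k12 \<noteq> k13" "k12 \<noteq> k23" "k13 \<noteq> k23"
  using ends_k12 ends_k13 ends_k23 distinct_points by (auto split: if_splits)

lemma ends_disjoint: "\<forall>c\<in>T. \<forall>d\<in>T. c \<noteq> d \<longrightarrow> ends c \<inter> ends d = {}"
  using distinct_points by (auto simp: T_eq ends_k12 ends_k13 ends_k23)

lemma points_covered: "(\<Union>c\<in>T. ends c) = {a1, y1, a2, y2, a3, y3}"
  by (auto simp: T_eq ends_k12 ends_k13 ends_k23)

lemma chord_at_points:
  "chord_at T a1 = (if b1 then k12 else k13)" "chord_at T y1 = (if b1 then k13 else k12)"
  "chord_at T a2 = (if b2 then k12 else k23)" "chord_at T y2 = (if b2 then k23 else k12)"
  "chord_at T a3 = (if b3 then k13 else k23)" "chord_at T y3 = (if b3 then k23 else k13)"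
  by (rule chord_at_eqI[OF _ _ ends_disjoint]; simp add: T_eq ends_k12 ends_k13 ends_k23)+

lemma over_under_k12: "over k12 = a1 \<and> under k12 = a2 \<or> over k12 = a2 \<and> under k12 = a1"
proof -
  have "ctail k12 = (if b1 then a1 else y1) \<and> chead k12 = (if b2 then a2 else y2)
      \<or> ctail k12 = (if b2 then a2 else y2) \<and> chead k12 = (if b1 then a1 else y1)"
    using points_ne by (intro ends_doubleton_cases[OF ends_k12]) auto
  then show ?thesis by (elim disjE conjE; cases b1; cases b2) (simp_all add: arc_of_points)
qed

lemma over_under_k13: "over k13 = a1 \<and> under k13 = a3 \<or> over k13 = a3 \<and> under k13 = a1"
proof -
  have "ctail k13 = (if b1 then y1 else a1) \<and> chead k13 = (if b3 then a3 else y3)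
      \<or> ctail k13 = (if b3 then a3 else y3) \<and> chead k13 = (if b1 then y1 else a1)"
    using points_ne by (intro ends_doubleton_cases[OF ends_k13]) auto
  then show ?thesis by (elim disjE conjE; cases b1; cases b3) (simp_all add: arc_of_points)
qed

lemma over_under_k23: "over k23 = a2 \<and> under k23 = a3 \<or> over k23 = a3 \<and> under k23 = a2"
proof -
  have "ctail k23 = (if b2 then y2 else a2) \<and> chead k23 = (if b3 then y3 else a3)
      \<or> ctail k23 = (if b3 then y3 else a3) \<and> chead k23 = (if b2 then y2 else a2)"
    using points_ne by (intro ends_doubleton_cases[OF ends_k23]) auto
  then show ?thesis by (elim disjE conjE; cases b2; cases b3) (simp_all add: arc_of_points)
qed

lemma over_ne_under: "c \<in> T \<Longrightarrow> over c \<noteq> under c"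
  using over_under_k12 over_under_k13 over_under_k23 points_ne by (auto simp: T_eq)

lemma tail_ne_head: "\<forall>c\<in>T. ctail c \<noteq> chead c"
  using over_ne_under by metis

lemma point_in_heads_iff:
  assumes "x \<in> (\<Union>c\<in>T. ends c)"
  shows "x \<in> chead ` T \<longleftrightarrow> over (chord_at T x) \<noteq> arc_of N A x"
proof -
  obtain c where c: "c \<in> T" "x \<in> ends c" using assms by blast
  have "chord_at T x = c" using c ends_disjoint by (rule chord_at_eqI)
  moreover have "x \<in> chead ` T \<longleftrightarrow> x = chead c"
    using c ends_disjoint tail_ne_head by (auto simp: ends_def)
  ultimately show ?thesis using c(2) over_ne_under[OF c(1)] by (auto simp: ends_def)
qed

lemma point_in_tails_iff:
  assumes "x \<in> (\<Union>c\<in>T. ends c)"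
  shows "x \<in> ctail ` T \<longleftrightarrow> over (chord_at T x) = arc_of N A x"
proof -
  obtain c where c: "c \<in> T" "x \<in> ends c" using assms by blast
  have "chord_at T x = c" using c ends_disjoint by (rule chord_at_eqI)
  moreover have "x \<in> ctail ` T \<longleftrightarrow> x = ctail c"
    using c ends_disjoint tail_ne_head by (auto simp: ends_def)
  ultimately show ?thesis using c(2) over_ne_under[OF c(1)] by (auto simp: ends_def)
qed

lemma arc_in_heads_iff:
  "arc N a1 \<subseteq> chead ` T \<longleftrightarrow> over k12 \<noteq> a1 \<and> over k13 \<noteq> a1"
  "arc N a2 \<subseteq> chead ` T \<longleftrightarrow> over k12 \<noteq> a2 \<and> over k23 \<noteq> a2"
  "arc N a3 \<subseteq> chead ` T \<longleftrightarrow> over k13 \<noteq> a3 \<and> over k23 \<noteq> a3"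
  by (simp_all add: arcs point_in_heads_iff points_covered chord_at_points arc_of_points; blast)+

lemma arc_in_tails_iff:
  "arc N a1 \<subseteq> ctail ` T \<longleftrightarrow> over k12 = a1 \<and> over k13 = a1"
  "arc N a2 \<subseteq> ctail ` T \<longleftrightarrow> over k12 = a2 \<and> over k23 = a2"
  "arc N a3 \<subseteq> ctail ` T \<longleftrightarrow> over k13 = a3 \<and> over k23 = a3"
  by (simp_all add: arcs point_in_tails_iff points_covered chord_at_points arc_of_points; blast)+

text \<open>A head and a tail on the same arc always come from different chords, since no chord of T
  has both ends on one arc.\<close>
lemma arc_mixed_iff:
  assumes "a \<in> A"
  shows "(\<exists>c\<in>T. \<exists>d\<in>T. c \<noteq> d \<and> chead c \<in> arc N a \<and> ctail d \<in> arc N a)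
    \<longleftrightarrow> \<not> arc N a \<subseteq> chead ` T \<and> \<not> arc N a \<subseteq> ctail ` T"
proof
  assume "\<exists>c\<in>T. \<exists>d\<in>T. c \<noteq> d \<and> chead c \<in> arc N a \<and> ctail d \<in> arc N a"
  then obtain c d where cd: "c \<in> T" "d \<in> T" "chead c \<in> arc N a" "ctail d \<in> arc N a"
    by blast
  have "chead c \<notin> ctail ` T" "ctail d \<notin> chead ` T"
    using head_ne_tail[OF ends_disjoint tail_ne_head] cd(1,2) by (metis imageE)+
  then show "\<not> arc N a \<subseteq> chead ` T \<and> \<not> arc N a \<subseteq> ctail ` T"
    using cd(3,4) by blast
next
  assume not_uniform: "\<not> arc N a \<subseteq> chead ` T \<and> \<not> arc N a \<subseteq> ctail ` T"
  have covered: "arc N a \<subseteq> chead ` T \<union> ctail ` T"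
    using assms points_covered by (auto simp: A_eq arcs ends_def)
  obtain x y where "x \<in> arc N a" "x \<notin> chead ` T" "y \<in> arc N a" "y \<notin> ctail ` T"
    using not_uniform by blast
  then obtain c d where cd: "c \<in> T" "d \<in> T" "chead c \<in> arc N a" "ctail d \<in> arc N a"
    using covered by blast
  have "under c = a" "over d = a"
    using arc_of_eqI[OF assms cd(3) arcs_disjoint] arc_of_eqI[OF assms cd(4) arcs_disjoint] .
  then have "c \<noteq> d" using over_ne_under[OF cd(1)] by metis
  then show "\<exists>c\<in>T. \<exists>d\<in>T. c \<noteq> d \<and> chead c \<in> arc N a \<and> ctail d \<in> arc N a"
    using cd by blast
qed

lemma matched_iff: "matched N T A \<longleftrightarrow> \<not> overpasses_cyclic"
proof -
  have bex_A: "(\<exists>x\<in>A. P x) \<longleftrightarrow> P a1 \<or> P a2 \<or> P a3" for P by (simp add: A_eq)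
  have "matched N T A \<longleftrightarrow> (\<exists>ah\<in>A. \<exists>atl\<in>A. \<exists>am\<in>A. ah \<noteq> atl \<and> ah \<noteq> am \<and> atl \<noteq> am
     \<and> arc N ah \<subseteq> chead ` T \<and> arc N atl \<subseteq> ctail ` T
     \<and> \<not> arc N am \<subseteq> chead ` T \<and> \<not> arc N am \<subseteq> ctail ` T)"
    unfolding matched_def using arc_mixed_iff by meson
  also have "\<dots> \<longleftrightarrow> \<not> overpasses_cyclic"
  proof -
    have "over k12 = a2 \<longleftrightarrow> over k12 \<noteq> a1" "over k13 = a3 \<longleftrightarrow> over k13 \<noteq> a1"
      "over k23 = a3 \<longleftrightarrow> over k23 \<noteq> a2"
      using over_under_k12 over_under_k13 over_under_k23 points_ne by auto
    then show ?thesis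
      unfolding bex_A arc_in_heads_iff arc_in_tails_iff
      using points_ne by (simp add: eq_commute[of a2 a1] eq_commute[of a3 a1] eq_commute[of a3 a2]) blast
  qed
  finally show ?thesis .
qed

lemma crosses_in_triple:
  "crosses k12 k13 = b1" "crosses k13 k12 = b1" "crosses k12 k23 = (\<not> b2)"
  "crosses k23 k12 = (\<not> b2)" "crosses k13 k23 = b3" "crosses k23 k13 = b3"
  using counterclockwise
  by (cases b1; cases b2; cases b3;
      auto simp: crosses_by_ends[OF ends_k12 ends_k13] crosses_by_ends[OF ends_k13 ends_k12]
        crosses_by_ends[OF ends_k12 ends_k23] crosses_by_ends[OF ends_k23 ends_k12]
        crosses_by_ends[OF ends_k13 ends_k23] crosses_by_ends[OF ends_k23 ends_k13]
        points_ne points_ne[symmetric] cyc_between_def)+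

lemma parities:
  "parity T k12 = - sign_of b1 * sign_of b2"
  "parity T k13 = sign_of b1 * sign_of b3"
  "parity T k23 = - sign_of b2 * sign_of b3"
  using parity_in_triple[of T k12 k13 k23] parity_in_triple[of T k13 k12 k23]
    parity_in_triple[of T k23 k12 k13] chords_distinct
  by (simp_all add: T_eq insert_commute crosses_in_triple sign_of_def)

lemma directions:
  "direction N A k12 = sign_of (over k12 = a1)"
  "direction N A k13 = - sign_of (over k13 = a1)"
  "direction N A k23 = sign_of (over k23 = a2)"
proof -
  have "a1 < a2" "a2 < a3" using counterclockwise by linarith+
  then have next_arcs: "next_arc A a1 = a2" "next_arc A a2 = a3" "next_arc A a3 = a1"
    unfolding A_eq by (rule next_arc_of_three)+
  show "direction N A k12 = sign_of (over k12 = a1)"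
    using over_under_k12 points_ne
    by (elim disjE conjE) (simp_all add: direction_def sign_of_def next_arcs)
  show "direction N A k13 = - sign_of (over k13 = a1)"
    using over_under_k13 points_ne
    by (elim disjE conjE) (simp_all add: direction_def sign_of_def next_arcs)
  show "direction N A k23 = sign_of (over k23 = a2)"
    using over_under_k23 points_ne
    by (elim disjE conjE) (simp_all add: direction_def sign_of_def next_arcs)
qed

lemma three_signs:
  "three_sign N T A k12 = - (sign_of b1 * sign_of b2 * crossing_sign k12 a1)"
  "three_sign N T A k13 = - (sign_of b1 * sign_of b3 * crossing_sign k13 a1)"
  "three_sign N T A k23 = - (sign_of b2 * sign_of b3 * crossing_sign k23 a2)"
  by (simp_all add: three_sign_def parities directions algebra_simps)

lemma equal_three_signs_iff:
  "(\<forall>c\<in>T. \<forall>d\<in>T. three_sign N T A c = three_sign N T A d) \<longleftrightarrow> sign_products_agree"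
  unfolding constant_on_triple_iff[OF T_eq] three_signs by simp

lemma strand_heights_iff: "(\<exists>h. strand_heights N T A h) \<longleftrightarrow> \<not> overpasses_cyclic"
proof -
  have "(\<forall>c\<in>T. h (under c) < h (over c)) \<longleftrightarrow>
      (if over k12 = a1 then h a2 < h a1 else h a1 < h a2)
      \<and> (if over k13 = a1 then h a3 < h a1 else h a1 < h a3)
      \<and> (if over k23 = a2 then h a3 < h a2 else h a2 < h a3)" for h :: "nat \<Rightarrow> real"
    unfolding T_eq
    by (simp add: height_of_oriented_pair[OF over_under_k12] height_of_oriented_pair[OF over_under_k13]
        height_of_oriented_pair[OF over_under_k23] points_ne)
  then show ?thesis
    unfolding strand_heights_def
    using exists_heights_iff_acyclic[of a1 a2 a3] distinct_points by (simp add: A_eq)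
qed

lemma planar_strands_conditions:
  assumes "planar_strands N T A P V X"
  shows "cross2 (V a1) (V a2) \<noteq> 0" "cross2 (V a1) (V a3) \<noteq> 0" "cross2 (V a2) (V a3) \<noteq> 0"
    and "on_line (P a1) (V a1) (X k12)" "on_line (P a2) (V a2) (X k12)"
      "on_line (P a1) (V a1) (X k13)" "on_line (P a3) (V a3) (X k13)"
      "on_line (P a2) (V a2) (X k23)" "on_line (P a3) (V a3) (X k23)"
    and "sgn (cross2 (V a1) (V a2)) = of_int (crossing_sign k12 a1)"
      "sgn (cross2 (V a1) (V a3)) = of_int (crossing_sign k13 a1)"
      "sgn (cross2 (V a2) (V a3)) = of_int (crossing_sign k23 a2)"
    and "sgn (dot2 (vector_from (X k12) (X k13)) (V a1)) = of_int (sign_of b1)"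
      "sgn (dot2 (vector_from (X k12) (X k23)) (V a2)) = of_int (sign_of b2)"
      "sgn (dot2 (vector_from (X k13) (X k23)) (V a3)) = of_int (sign_of b3)"
proof -
  note strands = assms[unfolded planar_strands_def]
  show "cross2 (V a1) (V a2) \<noteq> 0" "cross2 (V a1) (V a3) \<noteq> 0" "cross2 (V a2) (V a3) \<noteq> 0"
    using strands points_ne by (simp_all add: A_eq)
  have on_lines: "on_line (P (over c)) (V (over c)) (X c) \<and> on_line (P (under c)) (V (under c)) (X c)"
    and crossing: "real_of_int (csign c) = sgn (cross2 (V (over c)) (V (under c)))"
    if "c \<in> T" for c
    using strands that by blast+
  have k: "k12 \<in> T" "k13 \<in> T" "k23 \<in> T" by (simp_all add: T_eq)
  show "on_line (P a1) (V a1) (X k12)" "on_line (P a2) (V a2) (X k12)"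
      "on_line (P a1) (V a1) (X k13)" "on_line (P a3) (V a3) (X k13)"
      "on_line (P a2) (V a2) (X k23)" "on_line (P a3) (V a3) (X k23)"
    using on_lines[OF k(1)] on_lines[OF k(2)] on_lines[OF k(3)]
    unfolding on_lines_of_oriented_pair[OF over_under_k12] on_lines_of_oriented_pair[OF over_under_k13]
      on_lines_of_oriented_pair[OF over_under_k23] by simp_all
  show "sgn (cross2 (V a1) (V a2)) = of_int (crossing_sign k12 a1)"
    using crossing[OF k(1)] by (simp only: crossing_sign_of_oriented_pair[OF over_under_k12 points_ne(2)])
  show "sgn (cross2 (V a1) (V a3)) = of_int (crossing_sign k13 a1)"
    using crossing[OF k(2)] by (simp only: crossing_sign_of_oriented_pair[OF over_under_k13 points_ne(4)])
  show "sgn (cross2 (V a2) (V a3)) = of_int (crossing_sign k23 a2)"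
    using crossing[OF k(3)] by (simp only: crossing_sign_of_oriented_pair[OF over_under_k23 points_ne(11)])
  have "\<forall>a\<in>{a1, a2, a3}. dot2 (vector_from (X (chord_at T a)) (X (chord_at T (Suc a mod N)))) (V a) > 0"
    using strands unfolding A_eq by blast
  then show "sgn (dot2 (vector_from (X k12) (X k13)) (V a1)) = of_int (sign_of b1)"
      "sgn (dot2 (vector_from (X k12) (X k23)) (V a2)) = of_int (sign_of b2)"
      "sgn (dot2 (vector_from (X k13) (X k23)) (V a3)) = of_int (sign_of b3)"
    by (simp_all add: chord_at_points flip: second_points add: order_sign_of_choice)
qed

lemma planar_strands_imp_sign_products_agree:
  assumes "planar_strands N T A P V X"
  shows sign_products_agree
proof -
  note conditions = planar_strands_conditions[OF assms]
  from crossing_order_sign_relations[OF conditions(4-9) conditions(1-3)]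
  show ?thesis
    unfolding conditions(10-15) of_int_mult[symmetric] of_int_eq_iff by (rule conjI)
qed

lemma planar_strands_of_three_lines:
  assumes lines: "on_line P1 V1 X12" "on_line P2 V2 X12" "on_line P1 V1 X13" "on_line P3 V3 X13"
      "on_line P2 V2 X23" "on_line P3 V3 X23"
    and crossings: "sgn (cross2 V1 V2) = of_int (crossing_sign k12 a1)"
      "sgn (cross2 V1 V3) = of_int (crossing_sign k13 a1)"
      "sgn (cross2 V2 V3) = of_int (crossing_sign k23 a2)"
    and orders: "sgn (dot2 (vector_from X12 X13) V1) = of_int (sign_of b1)"
      "sgn (dot2 (vector_from X12 X23) V2) = of_int (sign_of b2)"
      "sgn (dot2 (vector_from X13 X23) V3) = of_int (sign_of b3)"
  shows "\<exists>P V X. planar_strands N T A P V X"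
proof -
  define P where "P a = (if a = a1 then P1 else if a = a2 then P2 else P3)" for a
  define V where "V a = (if a = a1 then V1 else if a = a2 then V2 else V3)" for a
  define X where "X c = (if c = k12 then X12 else if c = k13 then X13 else X23)" for c
  have at_arcs: "P a1 = P1" "P a2 = P2" "P a3 = P3" "V a1 = V1" "V a2 = V2" "V a3 = V3"
    and at_chords: "X k12 = X12" "X k13 = X13" "X k23 = X23"
    using points_ne chords_distinct by (simp_all add: P_def V_def X_def)
  have nonzero: "sgn (cross2 V1 V2) \<noteq> 0" "sgn (cross2 V1 V3) \<noteq> 0" "sgn (cross2 V2 V3) \<noteq> 0"
      "sgn (dot2 (vector_from X12 X13) V1) \<noteq> 0" "sgn (dot2 (vector_from X12 X23) V2) \<noteq> 0"
      "sgn (dot2 (vector_from X13 X23) V3) \<noteq> 0"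
    using csign_cases[of k12] csign_cases[of k13] csign_cases[of k23]
    unfolding crossings orders by (auto simp: T_eq sign_of_def)
  have "planar_strands N T A P V X"
    unfolding planar_strands_def
  proof (intro conjI)
    show "\<forall>a\<in>A. \<forall>b\<in>A. a \<noteq> b \<longrightarrow> cross2 (V a) (V b) \<noteq> 0"
      using nonzero(1-3) points_ne
      by (auto simp: A_eq at_arcs cross2_antisym[of V2 V1] cross2_antisym[of V3 V1]
          cross2_antisym[of V3 V2])
    have "X12 \<noteq> X13" "X12 \<noteq> X23" "X13 \<noteq> X23"
      using nonzero(4-6) by (auto dest: distinct_if_dot2_nonzero)
    then show "inj_on X T"
      using chords_distinct by (simp add: T_eq at_chords)
    show "\<forall>c\<in>T. on_line (P (over c)) (V (over c)) (X c) \<and> on_line (P (under c)) (V (under c)) (X c)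
        \<and> real_of_int (csign c) = sgn (cross2 (V (over c)) (V (under c)))"
      unfolding T_eq using lines crossings
      by (simp add: on_lines_of_oriented_pair[OF over_under_k12]
          on_lines_of_oriented_pair[OF over_under_k13] on_lines_of_oriented_pair[OF over_under_k23]
          crossing_sign_of_oriented_pair[OF over_under_k12 points_ne(2)]
          crossing_sign_of_oriented_pair[OF over_under_k13 points_ne(4)]
          crossing_sign_of_oriented_pair[OF over_under_k23 points_ne(11)] at_arcs at_chords)
    show "\<forall>a\<in>A. dot2 (vector_from (X (chord_at T a)) (X (chord_at T (Suc a mod N)))) (V a) > 0"
      unfolding A_eq using orders
      by (simp add: chord_at_points order_sign_of_choice at_arcs at_chords flip: second_points)
  qed
  then show ?thesis by blast
qed


lemma sign_products_agree_imp_planar_strands: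
  assumes sign_products_agree
  shows "\<exists>P V X. planar_strands N T A P V X"
proof -
  have "real_of_int (crossing_sign k12 a1) \<in> {1, -1}" "real_of_int (crossing_sign k13 a1) \<in> {1, -1}"
    "real_of_int (crossing_sign k23 a2) \<in> {1, -1}" "real_of_int (sign_of b1) \<in> {1, -1}"
    "real_of_int (sign_of b2) \<in> {1, -1}" "real_of_int (sign_of b3) \<in> {1, -1}"
    using csign_cases[of k12] csign_cases[of k13] csign_cases[of k23]
    by (auto simp: T_eq sign_of_def)
  moreover have
    "real_of_int (sign_of b1) * of_int (sign_of b2) * of_int (crossing_sign k12 a1)
       = of_int (sign_of b1) * of_int (sign_of b3) * of_int (crossing_sign k13 a1)"
    "real_of_int (sign_of b1) * of_int (sign_of b3) * of_int (crossing_sign k13 a1)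
       = of_int (sign_of b2) * of_int (sign_of b3) * of_int (crossing_sign k23 a2)"
    using assms unfolding of_int_mult[symmetric] of_int_eq_iff by simp_all
  ultimately show ?thesis
    by (rule three_lines_realisable) (rule planar_strands_of_three_lines; assumption)
qed

lemma three_movable_iff: "three_movable N T A \<longleftrightarrow> \<not> overpasses_cyclic \<and> sign_products_agree"
  using three_movable_iff_heights_and_strands[of T N A] over_ne_under strand_heights_iff
    planar_strands_imp_sign_products_agree sign_products_agree_imp_planar_strands
  by blast

end

subsection \<open>Putting a triple into standard form\<close>

lemma card_3_sorted:
  assumes "card (A :: nat set) = 3"
  obtains a1 a2 a3 where "a1 < a2" "a2 < a3" "A = {a1, a2, a3}"
proof -
  have "finite A" using assms by (metis card.infinite zero_neq_numeral)
  then have "set (sorted_list_of_set A) = A" "sorted_wrt (<) (sorted_list_of_set A)"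
    "length (sorted_list_of_set A) = 3"
    using assms by simp_all
  then show thesis
    by (cases "sorted_list_of_set A" rule: list.exhaust; simp add: numeral_3_eq_3 length_Suc_conv)
      (auto intro: that)
qed

lemma triple_arcs_counterclockwise:
  assumes "triple_with_arcs N D T A"
  obtains a1 a2 a3 where "A = {a1, a2, a3}"
    "a1 < Suc a1 mod N" "Suc a1 mod N < a2" "a2 < Suc a2 mod N" "Suc a2 mod N < a3"
    "a3 < Suc a3 mod N \<or> Suc a3 mod N < a1"
proof -
  from assms have A_N: "A \<subseteq> {0..<N}" and card_A: "card A = 3"
    and disjoint: "\<forall>a\<in>A. \<forall>b\<in>A. a \<noteq> b \<longrightarrow> arc N a \<inter> arc N b = {}"
    unfolding triple_with_arcs_def by auto
  obtain a1 a2 a3 where a: "a1 < a2" "a2 < a3" and A: "A = {a1, a2, a3}"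
    using card_A by (rule card_3_sorted)
  have "a3 < N" using A_N A by auto
  then have Suc12: "Suc a1 mod N = Suc a1" "Suc a2 mod N = Suc a2" using a by auto
  have "arc N a1 \<inter> arc N a2 = {}" "arc N a2 \<inter> arc N a3 = {}" "arc N a1 \<inter> arc N a3 = {}"
    using disjoint a unfolding A by auto
  then have "Suc a1 \<noteq> a2" "Suc a2 \<noteq> a3" "Suc a3 mod N \<noteq> a1"
    unfolding arc_def Suc12 by auto
  moreover have "a3 < Suc a3 mod N \<or> Suc a3 mod N = 0"
  proof -
    have "Suc a3 < N \<or> Suc a3 = N" using \<open>a3 < N\<close> by linarith
    then show ?thesis by auto
  qed
  ultimately show thesis
    using a by (intro that[OF A]) (auto simp: Suc12)
qed

lemma two_pairs_split:
  assumes "distinct [x2, y2, x3, y3]" "distinct [p, q, r, s]" "{p, q, r, s} = {x2, y2, x3, y3}"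
    "{r, s} \<noteq> {x2, y2}" "{r, s} \<noteq> {x3, y3}"
  shows "p \<in> {x2, y2} \<and> q \<in> {x3, y3}
      \<and> {r, s} = {if p = x2 then y2 else x2, if q = x3 then y3 else x3}
    \<or> p \<in> {x3, y3} \<and> q \<in> {x2, y2}
      \<and> {r, s} = {if q = x2 then y2 else x2, if p = x3 then y3 else x3}"
proof -
  have "p \<in> {x2, y2, x3, y3}" "q \<in> {x2, y2, x3, y3}" "r \<in> {x2, y2, x3, y3}" "s \<in> {x2, y2, x3, y3}"
    unfolding assms(3)[symmetric] by simp_all
  then show ?thesis
    using assms(1,2,4,5) by (simp only: insert_iff empty_iff simp_thms) (elim disjE; simp add: doubleton_eq_iff)
qed

lemma three_chords_through_two_points:
  fixes T :: "chord set"
  assumes card: "card T = 3" and tail_ne_head: "\<forall>c\<in>T. ctail c \<noteq> chead c"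
    and disjoint: "\<forall>c\<in>T. \<forall>d\<in>T. c \<noteq> d \<longrightarrow> ends c \<inter> ends d = {}"
    and points: "x \<in> (\<Union>c\<in>T. ends c)" "y \<in> (\<Union>c\<in>T. ends c)" "x \<noteq> y"
    and not_joined: "\<forall>c\<in>T. ends c \<noteq> {x, y}"
  obtains F G H p q r s where "T = {F, G, H}" "ends F = {x, p}" "ends G = {y, q}" "ends H = {r, s}"
    "distinct [x, p, y, q, r, s]"
proof -
  obtain F where F: "F \<in> T" "x \<in> ends F" using points(1) by (rule UN_E)
  obtain G where G: "G \<in> T" "y \<in> ends G" using points(2) by (rule UN_E)
  obtain p where p: "ends F = {x, p}" "p \<noteq> x"
    using F(2) tail_ne_head[rule_format, OF F(1)] by (rule ends_eq_insert)
  obtain q where q: "ends G = {y, q}" "q \<noteq> y"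
    using G(2) tail_ne_head[rule_format, OF G(1)] by (rule ends_eq_insert)
  have "F \<noteq> G"
  proof
    assume "F = G"
    then have "p = y" using G(2) p points(3) by auto
    then show False using p(1) not_joined F(1) by blast
  qed
  then have "card (T - {F, G}) = 1" using card F(1) G(1) by (simp add: card_Diff_subset)
  then obtain H where "T - {F, G} = {H}" by (rule card_1_singletonE)
  then have H: "T = {F, G, H}" "H \<noteq> F" "H \<noteq> G" using F(1) G(1) by auto
  obtain r s where rs: "ends H = {r, s}" "r \<noteq> s"
    using tail_ne_head H by (auto simp: ends_def)
  have "{x, p} \<inter> {y, q} = {}" "{x, p} \<inter> {r, s} = {}" "{y, q} \<inter> {r, s} = {}"
    using disjoint H \<open>F \<noteq> G\<close> p q rs by (metis insert_iff)+
  then have "distinct [x, p, y, q, r, s]" using p q rs by auto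
  with H(1) p(1) q(1) rs(1) show thesis by (rule that)
qed

lemma three_chords_between_three_arcs:
  fixes T :: "chord set"
  assumes distinct: "distinct [x1, y1, x2, y2, x3, y3]" and card: "card T = 3"
    and tail_ne_head: "\<forall>c\<in>T. ctail c \<noteq> chead c"
    and disjoint: "\<forall>c\<in>T. \<forall>d\<in>T. c \<noteq> d \<longrightarrow> ends c \<inter> ends d = {}"
    and covered: "(\<Union>c\<in>T. ends c) = {x1, y1, x2, y2, x3, y3}"
    and between_arcs: "\<forall>c\<in>T. ends c \<noteq> {x1, y1} \<and> ends c \<noteq> {x2, y2} \<and> ends c \<noteq> {x3, y3}"
  obtains k12 k13 k23 b1 b2 b3 where "T = {k12, k13, k23}"
    "ends k12 = {if b1 then x1 else y1, if b2 then x2 else y2}"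
    "ends k13 = {if b1 then y1 else x1, if b3 then x3 else y3}"
    "ends k23 = {if b2 then y2 else x2, if b3 then y3 else x3}"
proof -
  have points: "x1 \<in> (\<Union>c\<in>T. ends c)" "y1 \<in> (\<Union>c\<in>T. ends c)" "x1 \<noteq> y1"
    using distinct unfolding covered by simp_all
  have "\<forall>c\<in>T. ends c \<noteq> {x1, y1}" using between_arcs by blast
  then obtain F G H p q r s
    where H: "T = {F, G, H}" and ends: "ends F = {x1, p}" "ends G = {y1, q}" "ends H = {r, s}"
      and "distinct [x1, p, y1, q, r, s]"
    by (rule three_chords_through_two_points[OF card tail_ne_head disjoint points])
  moreover have "{x1, p, y1, q, r, s} = {x1, y1, x2, y2, x3, y3}"
    using covered H ends by auto
  ultimately have "distinct [p, q, r, s]" "{p, q, r, s} = {x2, y2, x3, y3}"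
    using distinct by auto
  moreover have "{r, s} \<noteq> {x2, y2}" "{r, s} \<noteq> {x3, y3}"
    using between_arcs H ends by auto
  moreover have "distinct [x2, y2, x3, y3]" using distinct by simp
  ultimately consider
    "p \<in> {x2, y2}" "q \<in> {x3, y3}" "{r, s} = {if p = x2 then y2 else x2, if q = x3 then y3 else x3}"
    | "p \<in> {x3, y3}" "q \<in> {x2, y2}" "{r, s} = {if q = x2 then y2 else x2, if p = x3 then y3 else x3}"
    using two_pairs_split by metis
  then show thesis
  proof cases
    case 1
    then show thesis
      using that[of F G H True "p = x2" "q = x3"] H ends by auto
  next
    case 2
    then show thesis
      using that[of G F H False "q = x2" "p = x3"] H ends by (auto simp: insert_commute)
  qed
qed


lemma gauss_diagram_chords:
  assumes "gauss_diagram N D" "T \<subseteq> D"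
  shows "\<forall>c\<in>T. \<forall>d\<in>T. c \<noteq> d \<longrightarrow> ends c \<inter> ends d = {}"
    and "\<forall>c\<in>T. ctail c \<noteq> chead c" "\<forall>c\<in>T. csign c = 1 \<or> csign c = -1"
proof -
  from assms(1) have "\<forall>c\<in>D. \<forall>d\<in>D. c \<noteq> d \<longrightarrow> ends c \<inter> ends d = {}"
    and "\<forall>c\<in>D. ctail c < N \<and> chead c < N \<and> ctail c \<noteq> chead c \<and> (csign c = 1 \<or> csign c = -1)"
    unfolding gauss_diagram_def by simp_all
  with assms(2) show "\<forall>c\<in>T. \<forall>d\<in>T. c \<noteq> d \<longrightarrow> ends c \<inter> ends d = {}"
    and "\<forall>c\<in>T. ctail c \<noteq> chead c" "\<forall>c\<in>T. csign c = 1 \<or> csign c = -1"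
    by blast+
qed

lemma chord_within_arc_fills_arc:
  assumes "gauss_diagram N D" "triple_with_arcs N D T A"
    and c: "c \<in> T" "arc_of N A (ctail c) = arc_of N A (chead c)"
  obtains b where "b \<in> A" "arc N b = ends c"
proof -
  from assms(2) have T_D: "T \<subseteq> D"
    and arcs_disjoint: "\<forall>a\<in>A. \<forall>b\<in>A. a \<noteq> b \<longrightarrow> arc N a \<inter> arc N b = {}"
    and covered: "(\<Union>a\<in>A. arc N a) = (\<Union>c\<in>T. ends c)"
    unfolding triple_with_arcs_def by simp_all
  obtain b where b: "b \<in> A" "ctail c \<in> arc N b"
    using covered c(1) by (auto simp: ends_def)
  obtain b' where b': "b' \<in> A" "chead c \<in> arc N b'"
    using covered c(1) by (auto simp: ends_def)
  have "b' = b"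
    using c(2) arc_of_eqI[OF b arcs_disjoint] arc_of_eqI[OF b' arcs_disjoint] by simp
  then have "arc N b = ends c"
    using b(2) b'(2) gauss_diagram_chords(2)[OF assms(1) T_D] c(1) by (auto simp: arc_def ends_def)
  with b(1) show thesis by (rule that)
qed

text \<open>An arc filled by a single chord contains neither two heads, nor two tails, nor a head and a
  tail of different chords.\<close>
lemma chord_within_arc_not_matched:
  assumes "gauss_diagram N D" "triple_with_arcs N D T A"
    and c: "c \<in> T" "arc_of N A (ctail c) = arc_of N A (chead c)"
  shows "\<not> matched N T A"
proof
  from assms(2) have "card A = 3" and T_D: "T \<subseteq> D" unfolding triple_with_arcs_def by simp_all
  note chords = gauss_diagram_chords[OF assms(1) T_D]
  obtain b where b: "b \<in> A" "arc N b = ends c"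
    using assms by (rule chord_within_arc_fills_arc)
  have own_end: "d = c" if "d \<in> T" "x \<in> ends d" "x \<in> ends c" for d x
    using chords(1) that c(1) by blast
  assume "matched N T A"
  then obtain ah atl am where distinct: "ah \<in> A" "atl \<in> A" "am \<in> A" "ah \<noteq> atl" "ah \<noteq> am" "atl \<noteq> am"
    and heads: "arc N ah \<subseteq> chead ` T" and tails: "arc N atl \<subseteq> ctail ` T"
    and mixed: "\<exists>c\<in>T. \<exists>d\<in>T. c \<noteq> d \<and> chead c \<in> arc N am \<and> ctail d \<in> arc N am"
    unfolding matched_def by blast
  have "b \<in> {ah, atl, am}"
  proof (rule ccontr)
    assume "b \<notin> {ah, atl, am}"
    then have "card {b, ah, atl, am} = 4" using distinct by auto
    moreover have "card {b, ah, atl, am} \<le> card A"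
      using b(1) distinct \<open>card A = 3\<close> by (intro card_mono) (auto intro: card_ge_0_finite)
    ultimately show False using \<open>card A = 3\<close> by simp
  qed
  then consider "b = ah" | "b = atl" | "b = am" by blast
  then show False
  proof cases
    case 1
    then obtain d where "d \<in> T" "ctail c = chead d" using heads b(2) by (auto simp: ends_def)
    then show False using own_end[of d "ctail c"] chords(2) c(1) by (auto simp: ends_def)
  next
    case 2
    then obtain d where "d \<in> T" "chead c = ctail d" using tails b(2) by (auto simp: ends_def)
    then show False using own_end[of d "chead c"] chords(2) c(1) by (auto simp: ends_def)
  next
    case 3
    then obtain d e where "d \<in> T" "e \<in> T" "d \<noteq> e" "chead d \<in> ends c" "ctail e \<in> ends c"
      using mixed b(2) by blast
    then show False using own_end by (metis ends_def insertCI)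
  qed
qed

lemma arc_triple_if_no_chord_within_arc:
  assumes "gauss_diagram N D" "triple_with_arcs N D T A"
    and between_arcs: "\<forall>c\<in>T. arc_of N A (ctail c) \<noteq> arc_of N A (chead c)"
  obtains a1 a2 a3 y1 y2 y3 k12 k13 k23 b1 b2 b3
    where "arc_triple N T A a1 a2 a3 y1 y2 y3 k12 k13 k23 b1 b2 b3"
proof -
  from assms(2) have T_D: "T \<subseteq> D" and "card T = 3"
    and arcs_disjoint: "\<forall>a\<in>A. \<forall>b\<in>A. a \<noteq> b \<longrightarrow> arc N a \<inter> arc N b = {}"
    and covered: "(\<Union>a\<in>A. arc N a) = (\<Union>c\<in>T. ends c)"
    unfolding triple_with_arcs_def by simp_all
  note chords = gauss_diagram_chords[OF assms(1) T_D]
  obtain a1 a2 a3 where A: "A = {a1, a2, a3}"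
    and order: "a1 < Suc a1 mod N" "Suc a1 mod N < a2" "a2 < Suc a2 mod N" "Suc a2 mod N < a3"
      "a3 < Suc a3 mod N \<or> Suc a3 mod N < a1"
    using assms(2) by (rule triple_arcs_counterclockwise)
  define y1 y2 y3 where "y1 = Suc a1 mod N" and "y2 = Suc a2 mod N" and "y3 = Suc a3 mod N"
  have arcs: "arc N a1 = {a1, y1}" "arc N a2 = {a2, y2}" "arc N a3 = {a3, y3}"
    by (simp_all add: arc_def y1_def y2_def y3_def)
  have "ends c \<noteq> arc N a" if "c \<in> T" "a \<in> A" for c a
  proof
    assume "ends c = arc N a"
    then have "arc_of N A (ctail c) = a" "arc_of N A (chead c) = a"
      using arc_of_eqI[OF \<open>a \<in> A\<close> _ arcs_disjoint] by (auto simp: ends_def)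
    then show False using between_arcs \<open>c \<in> T\<close> by auto
  qed
  then have between: "\<forall>c\<in>T. ends c \<noteq> {a1, y1} \<and> ends c \<noteq> {a2, y2} \<and> ends c \<noteq> {a3, y3}"
    by (simp add: A flip: arcs)
  have distinct: "distinct [a1, y1, a2, y2, a3, y3]"
    using order by (auto simp: y1_def y2_def y3_def)
  have points: "(\<Union>c\<in>T. ends c) = {a1, y1, a2, y2, a3, y3}"
    unfolding covered[symmetric] by (auto simp: A arcs)
  obtain k12 k13 k23 b1 b2 b3 where "T = {k12, k13, k23}"
    "ends k12 = {if b1 then a1 else y1, if b2 then a2 else y2}"
    "ends k13 = {if b1 then y1 else a1, if b3 then a3 else y3}"
    "ends k23 = {if b2 then y2 else a2, if b3 then y3 else a3}"
    by (rule three_chords_between_three_arcs[OF distinct \<open>card T = 3\<close> chords(2,1) points between])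
  then have "arc_triple N T A a1 a2 a3 y1 y2 y3 k12 k13 k23 b1 b2 b3"
    using A order chords(3) by unfold_locales (auto simp: y1_def y2_def y3_def)
  then show thesis by (rule that)
qed

theorem mainTheorem1:
  fixes N :: nat and D T :: "chord set" and A :: "nat set"
  assumes "gauss_diagram N D"
    and "triple_with_arcs N D T A"
  shows "three_movable N T A \<longleftrightarrow>
           (matched N T A \<and> (\<forall>c\<in>T. \<forall>d\<in>T. three_sign N T A c = three_sign N T A d))"
proof (cases "\<forall>c\<in>T. arc_of N A (ctail c) \<noteq> arc_of N A (chead c)")
  case True
  then obtain a1 a2 a3 y1 y2 y3 k12 k13 k23 b1 b2 b3
    where "arc_triple N T A a1 a2 a3 y1 y2 y3 k12 k13 k23 b1 b2 b3"
    using assms by (elim arc_triple_if_no_chord_within_arc)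
  then interpret arc_triple N T A a1 a2 a3 y1 y2 y3 k12 k13 k23 b1 b2 b3 .
  show ?thesis using three_movable_iff matched_iff equal_three_signs_iff by blast
next
  case False
  then obtain c where "c \<in> T" "arc_of N A (ctail c) = arc_of N A (chead c)" by blast
  then show ?thesis
    using chord_within_arc_not_matched[OF assms] three_movable_no_chord_within_arc by blast
qed

end
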